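(* Let $M$ be a finite abelian group of odd order and exponent greater than $2$. Then $(K,1)=\{(A,1):A\in K\}$ is the only subloop of $L_M$ of order $4$.
   Context: Let $K=\{1,a,b,c\}$ be the Klein four-group. Set $L_M=K\times M$ with the operation $(A,x)*(B,y)=(AB,xy)$ if $B=1$, and $(A,x)*(B,y)=(AB,x^{-1}y)$ if $B\neq 1$. *)

theory Defs
  imports "HOL-Algebra.Algebra"
begin

datatype klein = K1 | Ka | Kb | Kc

fun kmult :: "klein \<Rightarrow> klein \<Rightarrow> klein" where
  "kmult K1 y = y"
| "kmult x K1 = x"
| "kmult Ka Ka = K1" | "kmult Ka Kb = Kc" | "kmult Ka Kc = Kb"
| "kmult Kb Ka = Kc" | "kmult Kb Kb = K1" | "kmult Kb Kc = Ka"
| "kmult Kc Ka = Kb" | "kmult Kc Kb = Ka" | "kmult Kc Kc = K1"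

definition LM_carrier :: "('a, 'b) monoid_scheme \<Rightarrow> (klein \<times> 'a) set" where
  "LM_carrier M = UNIV \<times> carrier M"

definition LM_mult :: "('a, 'b) monoid_scheme \<Rightarrow> klein \<times> 'a \<Rightarrow> klein \<times> 'a \<Rightarrow> klein \<times> 'a" where
  "LM_mult M p q =
     (if fst q = K1 then (kmult (fst p) (fst q), snd p \<otimes>\<^bsub>M\<^esub> snd q)
      else (kmult (fst p) (fst q), inv\<^bsub>M\<^esub> (snd p) \<otimes>\<^bsub>M\<^esub> snd q))"

definition LM_subloop :: "('a, 'b) monoid_scheme \<Rightarrow> (klein \<times> 'a) set \<Rightarrow> bool" where
  "LM_subloop M H \<longleftrightarrow> H \<subseteq> LM_carrier M \<and> (K1, \<one>\<^bsub>M\<^esub>) \<in> H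
     \<and> (\<forall>x\<in>H. \<forall>y\<in>H. LM_mult M x y \<in> H)
     \<and> (\<forall>x\<in>H. \<forall>y\<in>H. \<exists>z\<in>H. LM_mult M x z = y)
     \<and> (\<forall>x\<in>H. \<forall>y\<in>H. \<exists>z\<in>H. LM_mult M z x = y)"

definition group_exponent :: "('a, 'b) monoid_scheme \<Rightarrow> nat" where
  "group_exponent G = (LEAST n. 0 < n \<and> (\<forall>x\<in>carrier G. x [^]\<^bsub>G\<^esub> n = \<one>\<^bsub>G\<^esub>))"

end

theory Submission
  imports Defs
begin

text \<open>Let \<open>N\<close> be the set of \<open>n\<close> with \<open>(1, n) \<in> H\<close>. Left division in \<open>H\<close> makes \<open>N\<close> a subgroup
  of \<open>M\<close> and every nonempty fibre \<open>{x. (A, x) \<in> H}\<close> a translate of \<open>N\<close>, so \<open>|N|\<close> divides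
  \<open>|H| = 4\<close>; being odd, \<open>|N| = 1\<close>. Hence \<open>H\<close> meets each of the four cosets \<open>{A} \<times> M\<close> in exactly one
  point \<open>(A, x\<^sub>A)\<close>. Multiplying these points gives \<open>x\<^sub>a x\<^sub>c = x\<^sub>b\<close>, \<open>x\<^sub>b x\<^sub>c = x\<^sub>a\<close> and \<open>x\<^sub>a x\<^sub>b = x\<^sub>c\<close>,
  so \<open>x\<^sub>c\<^sup>2 = 1\<close>, then \<open>x\<^sub>a = x\<^sub>b\<close> and \<open>x\<^sub>a\<^sup>2 = 1\<close>; in a group of odd order all of them are \<open>1\<close>.\<close>

lemma kmult_K1_right [simp]: "kmult A K1 = A"
  by (cases A) simp_all

lemma kmult_eq_left_iff: "kmult A B = A \<longleftrightarrow> B = K1"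
  by (cases A; cases B) simp_all

lemma kmult_eq_K1_iff: "kmult A B = K1 \<longleftrightarrow> A = B"
  by (cases A; cases B) simp_all

lemma kmult_cancel_left [simp]: "kmult A (kmult A B) = B"
  by (cases A; cases B) simp_all

lemma kmult_cancel_right [simp]: "kmult (kmult B A) A = B"
  by (cases A; cases B) simp_all

lemma UNIV_klein: "(UNIV :: klein set) = {K1, Ka, Kb, Kc}"
  using klein.exhaust by blast

instance klein :: finite
  by standard (simp add: UNIV_klein)

lemma card_UNIV_klein: "card (UNIV :: klein set) = 4"
  by (simp add: UNIV_klein)

lemma LM_mult_K1_right [simp]: "LM_mult M (A, x) (K1, y) = (A, x \<otimes>\<^bsub>M\<^esub> y)"
  by (simp add: LM_mult_def)

lemma LM_mult_non_K1_right:
  "B \<noteq> K1 \<Longrightarrow> LM_mult M (A, x) (B, y) = (kmult A B, inv\<^bsub>M\<^esub> x \<otimes>\<^bsub>M\<^esub> y)"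
  by (simp add: LM_mult_def)

definition LM_fibre :: "(klein \<times> 'a) set \<Rightarrow> klein \<Rightarrow> 'a set" where
  "LM_fibre H A = {x. (A, x) \<in> H}"

lemma LM_fibre_iff [simp]: "x \<in> LM_fibre H A \<longleftrightarrow> (A, x) \<in> H"
  by (simp add: LM_fibre_def)

lemma Sigma_LM_fibre: "Sigma (fst ` H) (LM_fibre H) = H"
  by force

lemma (in group) mult_self_eq_one_iff_odd_order:
  assumes "odd (order G)" and x: "x \<in> carrier G"
  shows "x \<otimes> x = \<one> \<longleftrightarrow> x = \<one>"
proof
  assume sq: "x \<otimes> x = \<one>"
  obtain k where k: "order G = Suc (2 * k)"
    using assms(1) by (metis oddE Suc_eq_plus1)
  have "x [^] (2::nat) = \<one>"
    using sq x by (simp add: numeral_2_eq_2)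
  then have "x [^] (2 * k) = \<one>"
    by (metis nat_pow_pow x nat_pow_one)
  then show "x = \<one>"
    using pow_order_eq_1[OF x] x by (simp add: k)
qed simp

lemma
  assumes "LM_subloop M H"
  shows LM_subloop_subset: "H \<subseteq> UNIV \<times> carrier M"
    and LM_subloop_one: "(K1, \<one>\<^bsub>M\<^esub>) \<in> H"
    and LM_subloop_closed: "p \<in> H \<Longrightarrow> q \<in> H \<Longrightarrow> LM_mult M p q \<in> H"
    and LM_subloop_left_div: "p \<in> H \<Longrightarrow> q \<in> H \<Longrightarrow> \<exists>z\<in>H. LM_mult M p z = q"
  using assms unfolding LM_subloop_def LM_carrier_def by auto

context group
begin

lemma LM_subloop_fibre_eq_image:
  assumes H: "LM_subloop G H" and Ax: "(A, x) \<in> H"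
  shows "LM_fibre H A = (\<lambda>n. x \<otimes> n) ` LM_fibre H K1"
proof (intro equalityI subsetI)
  fix y assume "y \<in> LM_fibre H A"
  then obtain B z where z: "(B, z) \<in> H" "LM_mult G (A, x) (B, z) = (A, y)"
    using LM_subloop_left_div[OF H Ax] by fastforce
  then have "B = K1"
    by (auto simp: LM_mult_def kmult_eq_left_iff split: if_splits)
  then show "y \<in> (\<lambda>n. x \<otimes> n) ` LM_fibre H K1"
    using z by auto
next
  fix y assume "y \<in> (\<lambda>n. x \<otimes> n) ` LM_fibre H K1"
  then obtain n where "(K1, n) \<in> H" "y = x \<otimes> n" by auto
  then show "y \<in> LM_fibre H A"
    using LM_subloop_closed[OF H Ax, of "(K1, n)"] by simp
qed

lemma LM_subloop_fibre_K1_subgroup: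
  assumes H: "LM_subloop G H"
  shows "subgroup (LM_fibre H K1) G"
proof (rule subgroupI)
  show N: "LM_fibre H K1 \<subseteq> carrier G" and "LM_fibre H K1 \<noteq> {}"
    using LM_subloop_subset[OF H] LM_subloop_one[OF H] by auto
  fix n m assume n: "n \<in> LM_fibre H K1" and m: "m \<in> LM_fibre H K1"
  then show "n \<otimes> m \<in> LM_fibre H K1"
    using LM_subloop_closed[OF H, of "(K1, n)" "(K1, m)"] by simp
  have "\<one> \<in> (\<lambda>m. n \<otimes> m) ` LM_fibre H K1"
    using LM_subloop_fibre_eq_image[OF H, of K1 n] LM_subloop_one[OF H] n by simp
  then obtain n' where "n' \<in> LM_fibre H K1" "n \<otimes> n' = \<one>"
    by (metis imageE)
  then show "inv n \<in> LM_fibre H K1"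
    using N n by (metis inv_comm inv_equality subsetD)
qed

lemma LM_subloop_card_fibre:
  assumes H: "LM_subloop G H" and Ax: "(A, x) \<in> H"
  shows "card (LM_fibre H A) = card (LM_fibre H K1)"
proof -
  have "x \<in> carrier G" and "LM_fibre H K1 \<subseteq> carrier G"
    using LM_subloop_subset[OF H] Ax by auto
  then have "inj_on (\<lambda>n. x \<otimes> n) (LM_fibre H K1)"
    by (meson inj_on_def l_cancel subsetD)
  then show ?thesis
    using LM_subloop_fibre_eq_image[OF H Ax] by (simp add: card_image)
qed

lemma LM_subloop_card:
  assumes H: "LM_subloop G H" and "finite H"
  shows "card H = card (fst ` H) * card (LM_fibre H K1)"
proof -
  have "LM_fibre H A \<subseteq> snd ` H" for A
  proof
    fix x assume "x \<in> LM_fibre H A"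
    then show "x \<in> snd ` H"
      by (intro image_eqI[where x = "(A, x)"]) simp_all
  qed
  then have "\<forall>A\<in>fst ` H. finite (LM_fibre H A)"
    using \<open>finite H\<close> finite_subset by blast
  then have "card H = (\<Sum>A\<in>fst ` H. card (LM_fibre H A))"
    using card_SigmaI[OF finite] Sigma_LM_fibre[of H] by metis
  also have "\<dots> = (\<Sum>A\<in>fst ` H. card (LM_fibre H K1))"
    using LM_subloop_card_fibre[OF H] by (intro sum.cong) auto
  finally show ?thesis by simp
qed

lemma LM_subloop_section_trivial:
  assumes H: "LM_subloop G H" and odd: "odd (order G)"
    and single: "\<And>A. card (LM_fibre H A) = 1"
  shows "H = UNIV \<times> {\<one>}"
proof -
  have point: "\<exists>x. LM_fibre H A = {x}" for A
    using single[of A] by (meson card_1_singletonE)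
  obtain xa xb xc where
    fa: "LM_fibre H Ka = {xa}" and fb: "LM_fibre H Kb = {xb}" and fc: "LM_fibre H Kc = {xc}"
    using point[of Ka] point[of Kb] point[of Kc] by blast
  have on_point: "y = x" if "(A, y) \<in> H" "LM_fibre H A = {x}" for A x y
    using that by (metis LM_fibre_iff singletonD)
  have mem: "(Ka, xa) \<in> H" "(Kb, xb) \<in> H" "(Kc, xc) \<in> H"
    by (simp_all flip: LM_fibre_iff add: fa fb fc)
  then have in_G: "xa \<in> carrier G" "xb \<in> carrier G" "xc \<in> carrier G"
    using LM_subloop_subset[OF H] by auto
  have "(Kc, inv xa \<otimes> xb) \<in> H" "(Kc, inv xb \<otimes> xa) \<in> H" "(Kb, inv xa \<otimes> xc) \<in> H"
    using LM_subloop_closed[OF H mem(1,2)] LM_subloop_closed[OF H mem(2,1)]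
      LM_subloop_closed[OF H mem(1,3)]
    by (simp_all add: LM_mult_non_K1_right)
  then have "inv xa \<otimes> xb = xc" "inv xb \<otimes> xa = xc" "inv xa \<otimes> xc = xb"
    using on_point fb fc by blast+
  then have b_eq: "xb = xa \<otimes> xc" and a_eq: "xa = xb \<otimes> xc" and inv_a: "inv xa \<otimes> xc = xb"
    using in_G by (simp_all add: inv_solve_left')
  have "xa \<otimes> (xc \<otimes> xc) = xa \<otimes> xc \<otimes> xc"
    using in_G by (simp add: m_assoc)
  also have "\<dots> = xa"
    using a_eq b_eq by simp
  finally have "xc \<otimes> xc = \<one>"
    using in_G by simp
  then have "xc = \<one>"
    using in_G mult_self_eq_one_iff_odd_order[OF odd] by simp
  then have "xb = xa" "inv xa = xa"
    using b_eq inv_a in_G by simp_all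
  then have "xa \<otimes> xa = \<one>"
    using r_inv[OF in_G(1)] by simp
  then have "xa = \<one>"
    using in_G mult_self_eq_one_iff_odd_order[OF odd] by blast
  moreover have "LM_fibre H K1 = {\<one>}"
    using point[of K1] on_point[OF LM_subloop_one[OF H]] by blast
  ultimately have "LM_fibre H A = {\<one>}" for A
    using fa fb fc \<open>xb = xa\<close> \<open>xc = \<one>\<close> by (cases A) auto
  then have "(A, x) \<in> H \<longleftrightarrow> x = \<one>" for A x
    by (metis LM_fibre_iff singleton_iff)
  then show ?thesis
    by auto
qed

lemma LM_subloop_card_4_eq:
  assumes H: "LM_subloop G H" and card: "card H = 4" and odd: "odd (order G)"
  shows "H = UNIV \<times> {\<one>}"
proof (rule LM_subloop_section_trivial[OF H odd])
  let ?N = "LM_fibre H K1"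
  have "finite H"
    using card by (metis card.infinite zero_neq_numeral)
  have card_H: "card H = card (fst ` H) * card ?N"
    using LM_subloop_card[OF H \<open>finite H\<close>] .
  have odd_N: "odd (card ?N)"
    using lagrange[OF LM_subloop_fibre_K1_subgroup[OF H]] odd by (metis even_mult_iff)
  have "card ?N dvd card H"
    unfolding card_H by (rule dvd_triv_right)
  then have "card ?N dvd 2 ^ 2"
    using card by simp
  moreover have "coprime (card ?N) (2 ^ 2)"
    using odd_N unfolding coprime_power_right_iff by simp
  ultimately have "card ?N = 1"
    using coprime_common_divisor[of "card ?N" "2 ^ 2" "card ?N"] by simp
  then have "card (fst ` H) = card (UNIV :: klein set)"
    using card_H card by (simp add: card_UNIV_klein)
  then have "fst ` H = UNIV"
    by (rule card_subset_eq[OF finite subset_UNIV])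
  fix A
  have "A \<in> fst ` H"
    using \<open>fst ` H = UNIV\<close> by simp
  then obtain x where "(A, x) \<in> H"
    by force
  then show "card (LM_fibre H A) = 1"
    using LM_subloop_card_fibre[OF H] \<open>card ?N = 1\<close> by simp
qed

lemma LM_subloop_UNIV_times_one: "LM_subloop G (UNIV \<times> {\<one>})"
  unfolding LM_subloop_def LM_carrier_def
proof (intro conjI ballI)
  fix p q :: "klein \<times> 'a" assume "p \<in> UNIV \<times> {\<one>}" "q \<in> UNIV \<times> {\<one>}"
  then obtain A B where pq: "p = (A, \<one>)" "q = (B, \<one>)" by auto
  show "LM_mult G p q \<in> UNIV \<times> {\<one>}"
    using pq by (simp add: LM_mult_def)
  show "\<exists>z\<in>UNIV \<times> {\<one>}. LM_mult G p z = q"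
    using pq by (intro bexI[of _ "(kmult A B, \<one>)"]) (auto simp: LM_mult_def kmult_eq_K1_iff)
  show "\<exists>z\<in>UNIV \<times> {\<one>}. LM_mult G z p = q"
    using pq by (intro bexI[of _ "(kmult B A, \<one>)"]) (auto simp: LM_mult_def kmult_eq_K1_iff)
qed auto

end

theorem corollary4p5:
  fixes M :: "('a, 'b) monoid_scheme"
  assumes "comm_group M"
    and "finite (carrier M)"
    and "odd (order M)"
    and "group_exponent M > 2"
  shows "{H. LM_subloop M H \<and> card H = 4} = {UNIV \<times> {\<one>\<^bsub>M\<^esub>}}"
proof -
  interpret comm_group M by fact
  have card: "card ((UNIV :: klein set) \<times> {\<one>\<^bsub>M\<^esub>}) = 4"
    by (simp add: card_cartesian_product card_UNIV_klein)
  show ?thesis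
  proof (intro equalityI subsetI)
    fix H assume "H \<in> {H. LM_subloop M H \<and> card H = 4}"
    then have "H = UNIV \<times> {\<one>\<^bsub>M\<^esub>}"
      using LM_subloop_card_4_eq[OF _ _ assms(3)] by blast
    then show "H \<in> {UNIV \<times> {\<one>\<^bsub>M\<^esub>}}"
      by simp
  next
    fix H :: "(klein \<times> 'a) set" assume "H \<in> {UNIV \<times> {\<one>\<^bsub>M\<^esub>}}"
    then show "H \<in> {H. LM_subloop M H \<and> card H = 4}"
      using LM_subloop_UNIV_times_one card by simp
  qed
qed

end
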